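(* Let $\Gamma$ be a green Veldkamp quadrangle with point set $P$ and let $a,b\in P$. Then (i) $a\simeq b$ if and only if $a^{\rm op}=b^{\rm op}$; (ii) if $a\simeq b$, then $\Gamma_2(a)=\Gamma_2(b)$. In particular $\simeq$ is an equivalence relation on $P$.
   Context: A graph is a pair $(V,E)$ with $E$ a set of $2$-element subsets of $V$; $\Gamma_v$ is the set of neighbors of $v$; $\Gamma_m(v)=\{u\mid{\rm dist}(u,v)=m\}$. An $s$-path is a sequence $(x_0,\dots,x_s)$ of vertices with consecutive vertices adjacent and $x_{i-2}\ne x_i$ for $i\in[2,s]$. A closed $s$-path is an $s$-path with $s\ge3$ whose first and last vertices coincide; an $s$-circuit is the subgraph determined by a closed $s$-path. An opposition relation on a set $X$ is a symmetric anti-reflexive relation; trivial if any two distinct elements are related; $k$-plump if for every $S\subseteq X$ with $|S|\le k$ some element of $X$ is related to all elements of $S$. A Veldkamp graph is a graph with a $2$-plump opposition relation $\equiv_v$ on $\Gamma_v$ for each vertex $v$. A path $(v_0,\dots,v_s)$ is straight if $v_{i-1}\equiv_{v_i}v_{i+1}$ for all $i\in[1,s-1]$; a circuit is straight if every path in it is straight. A Veldkamp $n$-gon ($n\ge2$) is a Veldkamp graph satisfying (VP1) connected and bipartite; (VP2) for each $k\in[1,n-1]$ each straight $k$-path is the unique straight path between its endpoints of length at most $k$; (VP3) every straight $(n+1)$-path lies in a straight $2n$-circuit. A root is a straight $n$-path; two vertices are opposite if there is a root between them; $x^{\rm op}$ is the set of vertices opposite $x$. A Veldkamp quadrangle is a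 Veldkamp $4$-gon, with bipartition classes called points $P$ and lines $L$; it is green if $\equiv_x$ is trivial for every line $x$. A weed is a non-straight $4$-path $(a,x,b,y,c)$ with $a,b,c\in P$ and ${\rm dist}(a,c)=4$. For $a,b\in P$, write $a\simeq b$ if $a=b$ or there is a weed beginning at $a$ and ending at $b$. *)

theory Defs
  imports Main
begin

definition graph :: "'v set \<Rightarrow> 'v set set \<Rightarrow> bool" where
  "graph V E \<longleftrightarrow> (\<forall>e\<in>E. e \<subseteq> V \<and> card e = 2)"

definition adj :: "'v set set \<Rightarrow> 'v \<Rightarrow> 'v \<Rightarrow> bool" where
  "adj E u v \<longleftrightarrow> {u, v} \<in> E"

definition nbrs :: "'v set set \<Rightarrow> 'v \<Rightarrow> 'v set" where
  "nbrs E v = {u. adj E u v}"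

definition opposition_rel :: "'v set \<Rightarrow> ('v \<Rightarrow> 'v \<Rightarrow> bool) \<Rightarrow> bool" where
  "opposition_rel X R \<longleftrightarrow>
     (\<forall>x y. R x y \<longrightarrow> x \<in> X \<and> y \<in> X) \<and> (\<forall>x y. R x y \<longrightarrow> R y x) \<and> (\<forall>x. \<not> R x x)"

definition trivial_opp :: "'v set \<Rightarrow> ('v \<Rightarrow> 'v \<Rightarrow> bool) \<Rightarrow> bool" where
  "trivial_opp X R \<longleftrightarrow> (\<forall>x\<in>X. \<forall>y\<in>X. x \<noteq> y \<longrightarrow> R x y)"

definition plump :: "nat \<Rightarrow> 'v set \<Rightarrow> ('v \<Rightarrow> 'v \<Rightarrow> bool) \<Rightarrow> bool" where
  "plump k X R \<longleftrightarrow> (\<forall>S. S \<subseteq> X \<and> finite S \<and> card S \<le> k \<longrightarrow> (\<exists>x\<in>X. \<forall>s\<in>S. R x s))"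

text \<open>Veldkamp graph; \<open>opp v x y\<close> means x \<equiv>_v y.\<close>
definition veldkamp_graph :: "'v set \<Rightarrow> 'v set set \<Rightarrow> ('v \<Rightarrow> 'v \<Rightarrow> 'v \<Rightarrow> bool) \<Rightarrow> bool" where
  "veldkamp_graph V E opp \<longleftrightarrow> graph V E \<and>
     (\<forall>v\<in>V. opposition_rel (nbrs E v) (opp v) \<and> plump 2 (nbrs E v) (opp v))"

definition is_path :: "'v set \<Rightarrow> 'v set set \<Rightarrow> nat \<Rightarrow> 'v list \<Rightarrow> bool" where
  "is_path V E s xs \<longleftrightarrow> length xs = Suc s \<and> set xs \<subseteq> V \<and>
     (\<forall>i<s. adj E (xs ! i) (xs ! Suc i)) \<and>
     (\<forall>i. 2 \<le> i \<and> i \<le> s \<longrightarrow> xs ! (i - 2) \<noteq> xs ! i)"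

definition straight :: "('v \<Rightarrow> 'v \<Rightarrow> 'v \<Rightarrow> bool) \<Rightarrow> 'v list \<Rightarrow> bool" where
  "straight opp xs \<longleftrightarrow>
     (\<forall>i. 1 \<le> i \<and> i + 1 < length xs \<longrightarrow> opp (xs ! i) (xs ! (i - 1)) (xs ! (i + 1)))"

definition closed_path :: "'v set \<Rightarrow> 'v set set \<Rightarrow> nat \<Rightarrow> 'v list \<Rightarrow> bool" where
  "closed_path V E s xs \<longleftrightarrow> is_path V E s xs \<and> 3 \<le> s \<and> hd xs = last xs"

definition seq_edges :: "'v list \<Rightarrow> 'v set set" where
  "seq_edges xs = {{xs ! i, xs ! Suc i} | i. Suc i < length xs}"

definition path_in :: "'v set \<Rightarrow> 'v set set \<Rightarrow> 'v list \<Rightarrow> nat \<Rightarrow> 'v list \<Rightarrow> bool" where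
  "path_in V E c t ys \<longleftrightarrow> is_path V E t ys \<and> set ys \<subseteq> set c \<and>
     (\<forall>i<t. {ys ! i, ys ! Suc i} \<in> seq_edges c)"

definition straight_circuit ::
  "'v set \<Rightarrow> 'v set set \<Rightarrow> ('v \<Rightarrow> 'v \<Rightarrow> 'v \<Rightarrow> bool) \<Rightarrow> nat \<Rightarrow> 'v list \<Rightarrow> bool" where
  "straight_circuit V E opp s c \<longleftrightarrow> closed_path V E s c \<and>
     (\<forall>t ys. path_in V E c t ys \<longrightarrow> straight opp ys)"

definition walk :: "'v set set \<Rightarrow> 'v list \<Rightarrow> bool" where
  "walk E xs \<longleftrightarrow> xs \<noteq> [] \<and> (\<forall>i. Suc i < length xs \<longrightarrow> adj E (xs ! i) (xs ! Suc i))"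

definition connected_graph :: "'v set \<Rightarrow> 'v set set \<Rightarrow> bool" where
  "connected_graph V E \<longleftrightarrow>
     (\<forall>u\<in>V. \<forall>v\<in>V. \<exists>xs. walk E xs \<and> set xs \<subseteq> V \<and> hd xs = u \<and> last xs = v)"

definition bipartite :: "'v set \<Rightarrow> 'v set set \<Rightarrow> bool" where
  "bipartite V E \<longleftrightarrow> (\<exists>A. A \<subseteq> V \<and> (\<forall>u v. adj E u v \<longrightarrow> (u \<in> A \<longleftrightarrow> v \<notin> A)))"

text \<open>Graph distance (used only in connected graphs).\<close>
definition gdist :: "'v set set \<Rightarrow> 'v \<Rightarrow> 'v \<Rightarrow> nat" where
  "gdist E u v = (LEAST k. \<exists>xs. walk E xs \<and> length xs = Suc k \<and> hd xs = u \<and> last xs = v)"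

definition Gamma_m :: "'v set \<Rightarrow> 'v set set \<Rightarrow> nat \<Rightarrow> 'v \<Rightarrow> 'v set" where
  "Gamma_m V E m v = {u\<in>V. gdist E u v = m}"

definition veldkamp_ngon ::
  "'v set \<Rightarrow> 'v set set \<Rightarrow> ('v \<Rightarrow> 'v \<Rightarrow> 'v \<Rightarrow> bool) \<Rightarrow> nat \<Rightarrow> bool" where
  "veldkamp_ngon V E opp n \<longleftrightarrow> 2 \<le> n \<and> veldkamp_graph V E opp \<and>
     connected_graph V E \<and> bipartite V E \<and>
     (\<forall>k p. 1 \<le> k \<and> k \<le> n - 1 \<and> is_path V E k p \<and> straight opp p \<longrightarrow>
        (\<forall>j q. j \<le> k \<and> is_path V E j q \<and> straight opp q \<and>
               hd q = hd p \<and> last q = last p \<longrightarrow> q = p)) \<and>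
     (\<forall>p. is_path V E (n + 1) p \<and> straight opp p \<longrightarrow>
        (\<exists>c. straight_circuit V E opp (2 * n) c \<and> path_in V E c (n + 1) p))"

text \<open>Green Veldkamp quadrangle with point set P (the other bipartition class is the line set).\<close>
definition green_quadrangle ::
  "'v set \<Rightarrow> 'v set set \<Rightarrow> ('v \<Rightarrow> 'v \<Rightarrow> 'v \<Rightarrow> bool) \<Rightarrow> 'v set \<Rightarrow> bool" where
  "green_quadrangle V E opp P \<longleftrightarrow> veldkamp_ngon V E opp 4 \<and> P \<subseteq> V \<and>
     (\<forall>u v. adj E u v \<longrightarrow> (u \<in> P \<longleftrightarrow> v \<notin> P)) \<and>
     (\<forall>x\<in>V - P. trivial_opp (nbrs E x) (opp x))"

text \<open>x^op for a Veldkamp n-gon: endpoints of roots (straight n-paths) starting at x.\<close>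
definition op_set ::
  "'v set \<Rightarrow> 'v set set \<Rightarrow> ('v \<Rightarrow> 'v \<Rightarrow> 'v \<Rightarrow> bool) \<Rightarrow> nat \<Rightarrow> 'v \<Rightarrow> 'v set" where
  "op_set V E opp n x = {y. \<exists>p. is_path V E n p \<and> straight opp p \<and> hd p = x \<and> last p = y}"

definition weed ::
  "'v set \<Rightarrow> 'v set set \<Rightarrow> ('v \<Rightarrow> 'v \<Rightarrow> 'v \<Rightarrow> bool) \<Rightarrow> 'v set \<Rightarrow> 'v list \<Rightarrow> bool" where
  "weed V E opp P w \<longleftrightarrow> is_path V E 4 w \<and> \<not> straight opp w \<and>
     w ! 0 \<in> P \<and> w ! 2 \<in> P \<and> w ! 4 \<in> P \<and> gdist E (w ! 0) (w ! 4) = 4"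

definition simeq ::
  "'v set \<Rightarrow> 'v set set \<Rightarrow> ('v \<Rightarrow> 'v \<Rightarrow> 'v \<Rightarrow> bool) \<Rightarrow> 'v set \<Rightarrow> 'v \<Rightarrow> 'v \<Rightarrow> bool" where
  "simeq V E opp P a b \<longleftrightarrow> a = b \<or> (\<exists>w. weed V E opp P w \<and> hd w = a \<and> last w = b)"

end

(*
  In a green quadrangle the opposition at lines is trivial, so a root starting at a point a is
  just a path a - x - b - y - d that is straight at the point b.  The basic tool is octagon
  closure: by (VP3) a straight 5-path lies on a straight 8-circuit, and walking along that
  circuit yields the two vertices closing it up.  It shows that the ends of a root are at
  distance 4, that a point opposite a is reached by a root through every line on a, and hence
  that every 4-path from a to a point opposite a is a root.

  A weed from a to c therefore joins two points at distance 4 that are not opposite.  For such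
  a pair every point collinear with c is collinear with a, and every point opposite a is
  opposite c; this gives (ii) and one half of (i).  Conversely, if a and c have the same
  opposite points, a root a - x - b - y - d is continued from d back to c through y; the
  resulting path a - x - b - s - c is not straight, since otherwise c would be opposite itself.
*)

theory Submission
  imports Defs
begin

lemma adj_sym: "adj E u v \<Longrightarrow> adj E v u"
  unfolding adj_def by (simp add: insert_commute)

lemma is_path_0: "is_path V E 0 [x] \<longleftrightarrow> x \<in> V"
  by (simp add: is_path_def)

lemma is_path_Cons_Cons:
  "is_path V E (Suc s) (x # y # xs) \<longleftrightarrow>
     x \<in> V \<and> adj E x y \<and> is_path V E s (y # xs) \<and> (\<forall>z ys. xs = z # ys \<longrightarrow> x \<noteq> z)"
proof -
  have shift: "(\<forall>i. 2 \<le> i \<and> i \<le> Suc s \<longrightarrow> R i) \<longleftrightarrow> (1 \<le> s \<longrightarrow> R 2) \<and> (\<forall>i. 2 \<le> i \<and> i \<le> s \<longrightarrow> R (Suc i))"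
    for R :: "nat \<Rightarrow> bool"
  proof (intro iffI conjI allI impI)
    fix i assume R: "(1 \<le> s \<longrightarrow> R 2) \<and> (\<forall>i. 2 \<le> i \<and> i \<le> s \<longrightarrow> R (Suc i))" and i: "2 \<le> i \<and> i \<le> Suc s"
    show "R i"
    proof (cases "i = 2")
      case False
      then have "i = Suc (i - 1)" "2 \<le> i - 1 \<and> i - 1 \<le> s" using i by auto
      then show ?thesis using R by metis
    qed (use R i in auto)
  qed auto
  have "(1 \<le> length xs \<longrightarrow> x \<noteq> xs ! 0) \<longleftrightarrow> (\<forall>z ys. xs = z # ys \<longrightarrow> x \<noteq> z)"
    by (cases xs) auto
  moreover have "(x # y # xs) ! (Suc i - 2) = (y # xs) ! (i - 2)" if "2 \<le> i" for i
    by (simp only: Suc_diff_le[OF that] nth_Cons_Suc)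
  ultimately show ?thesis
    unfolding is_path_def shift All_less_Suc2 by auto
qed

lemma straight_two: "straight opp [x, y]"
  by (simp add: straight_def)

lemma straight_Cons_Cons_Cons:
  "straight opp (x # y # z # xs) \<longleftrightarrow> opp y x z \<and> straight opp (y # z # xs)"
proof -
  have shift: "(\<forall>i. 1 \<le> i \<and> i + 1 < Suc n \<longrightarrow> R i) \<longleftrightarrow>
      (1 < n \<longrightarrow> R 1) \<and> (\<forall>i. 1 \<le> i \<and> i + 1 < n \<longrightarrow> R (Suc i))" for n and R :: "nat \<Rightarrow> bool"
  proof (intro iffI conjI allI impI)
    fix i assume R: "(1 < n \<longrightarrow> R 1) \<and> (\<forall>i. 1 \<le> i \<and> i + 1 < n \<longrightarrow> R (Suc i))"
      and i: "1 \<le> i \<and> i + 1 < Suc n"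
    show "R i"
    proof (cases "i = 1")
      case False
      then have "i = Suc (i - 1)" "1 \<le> i - 1 \<and> i - 1 + 1 < n" using i by auto
      then show ?thesis using R by metis
    qed (use R i in auto)
  qed auto
  show ?thesis unfolding straight_def by (simp only: length_Cons shift) simp
qed

lemma seq_edges_singleton: "seq_edges [x] = {}"
  by (simp add: seq_edges_def)

lemma seq_edges_Cons_Cons: "seq_edges (x # y # xs) = insert {x, y} (seq_edges (y # xs))"
proof (intro set_eqI iffI)
  fix e assume "e \<in> seq_edges (x # y # xs)"
  then obtain i where "e = {(x # y # xs) ! i, (x # y # xs) ! Suc i}" "Suc i < length (x # y # xs)"
    unfolding seq_edges_def by blast
  then show "e \<in> insert {x, y} (seq_edges (y # xs))"
    by (cases i) (auto simp: seq_edges_def)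
next
  fix e assume "e \<in> insert {x, y} (seq_edges (y # xs))"
  then consider "e = {x, y}" | j where "e = {(y # xs) ! j, (y # xs) ! Suc j}" "Suc j < length (y # xs)"
    unfolding seq_edges_def by blast
  then show "e \<in> seq_edges (x # y # xs)"
  proof cases
    case 1
    then show ?thesis unfolding seq_edges_def by force
  next
    case 2
    then have "e = {(x # y # xs) ! Suc j, (x # y # xs) ! Suc (Suc j)}" "Suc (Suc j) < length (x # y # xs)"
      by simp_all
    then show ?thesis unfolding seq_edges_def by blast
  qed
qed

lemma path_in_iff:
  "path_in V E c t ys \<longleftrightarrow> is_path V E t ys \<and> set ys \<subseteq> set c \<and> seq_edges ys \<subseteq> seq_edges c"
proof (cases "is_path V E t ys")
  case True
  then have "length ys = Suc t" by (simp add: is_path_def)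
  then have "(\<forall>i<t. {ys ! i, ys ! Suc i} \<in> seq_edges c) \<longleftrightarrow> seq_edges ys \<subseteq> seq_edges c"
    unfolding seq_edges_def[of ys] by auto
  then show ?thesis unfolding path_in_def by blast
qed (simp add: path_in_def)

lemma walk_singleton: "walk E [x]"
  by (simp add: walk_def)

lemma walk_Cons_Cons: "walk E (x # y # xs) \<longleftrightarrow> adj E x y \<and> walk E (y # xs)"
proof -
  have "(\<forall>i. Suc i < length (x # y # xs) \<longrightarrow> R i) \<longleftrightarrow>
      R 0 \<and> (\<forall>i. Suc i < length (y # xs) \<longrightarrow> R (Suc i))" for R :: "nat \<Rightarrow> bool"
    by (auto simp: less_Suc_eq_0_disj)
  then show ?thesis unfolding walk_def by simp
qed

lemma gdist_le: "walk E xs \<Longrightarrow> length xs = Suc k \<Longrightarrow> hd xs = u \<Longrightarrow> last xs = v \<Longrightarrow> gdist E u v \<le> k"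
  unfolding gdist_def by (rule Least_le) blast

lemma gdist_self [simp]: "gdist E u u = 0"
  using gdist_le[of E "[u]" 0 u u] walk_singleton[of E u] by simp

lemmas path_simps =
  is_path_0 is_path_Cons_Cons straight_two straight_Cons_Cons_Cons seq_edges_singleton seq_edges_Cons_Cons
  walk_singleton walk_Cons_Cons

section \<open>Cyclic indexing of closed lists\<close>

(* For a closed list c = [c_0, ..., c_(n-1), c_0], cyc_nth c i = c_(i mod n). *)
definition cyc_nth :: "'a list \<Rightarrow> int \<Rightarrow> 'a" where
  "cyc_nth c i = c ! nat (i mod (int (length c) - 1))"

lemma nat_mod_pred_less: "1 < m \<Longrightarrow> nat (i mod (int m - 1)) < m - 1"
  by (simp add: nat_less_iff)

lemma cyc_nth_plus_1:
  assumes "2 \<le> length c" "hd c = last c"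
  shows "cyc_nth c (i + 1) = c ! Suc (nat (i mod (int (length c) - 1)))"
proof -
  define n where "n = (int (length c) - 1)"
  have n: "0 < n" using assms(1) unfolding n_def by simp
  have r: "0 \<le> i mod n" "i mod n < n" using n by simp_all
  have step: "(i + 1) mod n = (i mod n + 1) mod n" by (simp add: mod_add_left_eq)
  show ?thesis
  proof (cases "i mod n + 1 < n")
    case True
    then have "(i + 1) mod n = i mod n + 1" using step r by simp
    then show ?thesis unfolding cyc_nth_def n_def[symmetric] using r by (simp add: nat_add_distrib)
  next
    case False
    then have last: "i mod n + 1 = n" using r by simp
    then have "(i + 1) mod n = 0" using step by simp
    moreover have "c ! 0 = c ! (length c - 1)"
      using assms hd_conv_nth[of c] last_conv_nth[of c] by fastforce
    moreover have "Suc (nat (i mod n)) = length c - 1" using last r unfolding n_def by (simp add: nat_eq_iff)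
    ultimately show ?thesis unfolding cyc_nth_def n_def[symmetric] by simp
  qed
qed

lemma cyc_nth_consecutive:
  assumes "2 \<le> length c" "hd c = last c" "\<And>r. Suc r < length c \<Longrightarrow> R (c ! r) (c ! Suc r)"
  shows "R (cyc_nth c i) (cyc_nth c (i + 1))"
proof -
  define r where "r = nat (i mod (int (length c) - 1))"
  have "Suc r < length c" using assms(1) nat_mod_pred_less[of "length c" i] unfolding r_def by simp
  moreover have "cyc_nth c i = c ! r" unfolding cyc_nth_def r_def ..
  moreover have "cyc_nth c (i + 1) = c ! Suc r" unfolding r_def by (rule cyc_nth_plus_1[OF assms(1,2)])
  ultimately show ?thesis using assms(3) by simp
qed

lemma cyc_nth_eq_iff:
  assumes "2 \<le> length c" "distinct (butlast c)"
  shows "cyc_nth c i = cyc_nth c j \<longleftrightarrow> i mod (int (length c) - 1) = j mod (int (length c) - 1)"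
proof -
  define n where "n = (int (length c) - 1)"
  have n: "0 < n" using assms(1) unfolding n_def by simp
  have lt: "nat (k mod n) < length (butlast c)" for k
    using assms(1) nat_mod_pred_less[of "length c" k] unfolding n_def by simp
  have "cyc_nth c k = butlast c ! nat (k mod n)" for k
    using lt[of k] unfolding cyc_nth_def n_def by (simp add: nth_butlast)
  then have "cyc_nth c i = cyc_nth c j \<longleftrightarrow> nat (i mod n) = nat (j mod n)"
    using nth_eq_iff_index_eq[OF assms(2) lt lt] by simp
  also have "\<dots> \<longleftrightarrow> i mod n = j mod n" using n by (simp add: eq_nat_nat_iff)
  finally show ?thesis unfolding n_def .
qed

lemma seq_edges_cyc_nth:
  assumes "2 \<le> length c" "hd c = last c" "e \<in> seq_edges c"
  shows "\<exists>j. e = {cyc_nth c j, cyc_nth c (j + 1)}"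
proof -
  obtain i where e: "e = {c ! i, c ! Suc i}" "Suc i < length c"
    using assms(3) unfolding seq_edges_def by blast
  then have "int i mod (int (length c) - 1) = int i" by simp
  then have "cyc_nth c (int i) = c ! i" "cyc_nth c (int i + 1) = c ! Suc i"
    using cyc_nth_plus_1[OF assms(1,2)] unfolding cyc_nth_def by simp_all
  then show ?thesis using e by metis
qed

lemma in_set_cyc_nth:
  assumes "2 \<le> length c" "hd c = last c" "x \<in> set c"
  shows "\<exists>k. x = cyc_nth c k"
proof -
  obtain r where r: "r < length c" "x = c ! r" using assms(3) by (auto simp: in_set_conv_nth)
  show ?thesis
  proof (cases "r = length c - 1")
    case True
    then have "x = c ! 0" using assms r hd_conv_nth[of c] last_conv_nth[of c] by fastforce
    then show ?thesis unfolding cyc_nth_def by (metis mod_0 nat_zero_as_int)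
  next
    case False
    then have "int r mod (int (length c) - 1) = int r" using r by simp
    then show ?thesis using r unfolding cyc_nth_def by (metis nat_int)
  qed
qed

lemma cyc_nth_in_set: "2 \<le> length c \<Longrightarrow> cyc_nth c i \<in> set c"
  using nat_mod_pred_less[of "length c" i] unfolding cyc_nth_def by simp

lemma periodic_neighbour:
  fixes C :: "int \<Rightarrow> 'a"
  assumes C: "\<And>i j. C i = C j \<longleftrightarrow> i mod n = j mod n"
    and e: "{C i, v} = {C j, C (j + 1)}"
  shows "v = C (i + 1) \<or> v = C (i - 1)"
  using e unfolding doubleton_eq_iff C
  by (metis C mod_add_left_eq mod_diff_left_eq add_diff_cancel_right')

lemma nonbacktracking_walk_periodic:
  fixes C :: "int \<Rightarrow> 'a"
  assumes C: "\<And>i j. C i = C j \<longleftrightarrow> i mod n = j mod n"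
    and edges: "\<And>i. i < m \<Longrightarrow> \<exists>j. {p ! i, p ! Suc i} = {C j, C (j + 1)}"
    and nb: "\<And>i. Suc (Suc i) \<le> m \<Longrightarrow> p ! i \<noteq> p ! Suc (Suc i)"
    and p01: "p ! 0 = C k" "p ! 1 = C (k + s)" and s: "s = 1 \<or> s = -1"
    and i: "i \<le> m"
  shows "p ! i = C (k + s * int i)"
proof -
  have "p ! i = C (k + s * int i) \<and> p ! Suc i = C (k + s * int (Suc i))" if "Suc i \<le> m" for i
    using that
  proof (induction i)
    case 0
    then show ?case using p01 by simp
  next
    case (Suc i)
    define x where "x = k + s * int (Suc i)"
    have prev: "p ! i = C (x - s)" and cur: "p ! Suc i = C x"
      using Suc unfolding x_def by (simp_all add: algebra_simps)
    obtain j where "{C x, p ! Suc (Suc i)} = {C j, C (j + 1)}"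
      using edges[of "Suc i"] Suc.prems cur by auto
    then have "p ! Suc (Suc i) = C (x + 1) \<or> p ! Suc (Suc i) = C (x - 1)"
      by (rule periodic_neighbour[OF C])
    moreover have "p ! Suc (Suc i) \<noteq> C (x - s)" using nb[of i] Suc.prems prev by simp
    ultimately have "p ! Suc (Suc i) = C (x + s)" using s by auto
    then show ?case using cur unfolding x_def by (simp add: algebra_simps)
  qed
  then show ?thesis using i p01 by (cases i) auto
qed

section \<open>Green Veldkamp quadrangles\<close>

locale green_veldkamp_quadrangle =
  fixes V :: "'v set" and E :: "'v set set" and opp :: "'v \<Rightarrow> 'v \<Rightarrow> 'v \<Rightarrow> bool" and P :: "'v set"
  assumes green_quadrangle: "green_quadrangle V E opp P"
begin

lemma veldkamp_4gon: "veldkamp_ngon V E opp 4"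
  using green_quadrangle unfolding green_quadrangle_def by blast

lemma points_in_V: "P \<subseteq> V"
  using green_quadrangle unfolding green_quadrangle_def by blast

lemma adj_point_iff: "adj E u v \<Longrightarrow> u \<in> P \<longleftrightarrow> v \<notin> P"
  using green_quadrangle unfolding green_quadrangle_def by blast

lemma veldkamp_graph: "veldkamp_graph V E opp"
  using veldkamp_4gon unfolding veldkamp_ngon_def by blast

lemma adj_in_V: "adj E u v \<Longrightarrow> u \<in> V \<and> v \<in> V"
  using veldkamp_graph unfolding veldkamp_graph_def graph_def adj_def by blast

lemma line_opp: "adj E x v \<Longrightarrow> adj E y v \<Longrightarrow> v \<notin> P \<Longrightarrow> x \<noteq> y \<Longrightarrow> opp v x y"
  using green_quadrangle adj_in_V[of x v] unfolding green_quadrangle_def trivial_opp_def nbrs_def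
  by (metis Diff_iff mem_Collect_eq)

lemma opposition: "v \<in> V \<Longrightarrow> opposition_rel (nbrs E v) (opp v)"
  using veldkamp_graph unfolding veldkamp_graph_def by blast

lemma opp_adj: "v \<in> V \<Longrightarrow> opp v x y \<Longrightarrow> adj E x v \<and> adj E y v"
  using opposition unfolding opposition_rel_def nbrs_def by blast

lemma opp_sym: "v \<in> V \<Longrightarrow> opp v x y \<Longrightarrow> opp v y x"
  using opposition unfolding opposition_rel_def by blast

lemma opp_neq: "v \<in> V \<Longrightarrow> opp v x y \<Longrightarrow> x \<noteq> y"
  using opposition unfolding opposition_rel_def by blast

lemma exists_opp_both:
  assumes "v \<in> V" "adj E x v" "adj E y v"
  shows "\<exists>z. adj E z v \<and> opp v z x \<and> opp v z y"
proof -
  have "plump 2 (nbrs E v) (opp v)"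
    using assms(1) veldkamp_4gon unfolding veldkamp_ngon_def veldkamp_graph_def by blast
  moreover have "{x, y} \<subseteq> nbrs E v" "card {x, y} \<le> 2"
    using assms(2,3) unfolding nbrs_def by (auto simp: card_insert_if)
  ultimately obtain z where "z \<in> nbrs E v" "\<forall>s\<in>{x, y}. opp v z s"
    unfolding plump_def by (meson finite.emptyI finite.insertI)
  then show ?thesis unfolding nbrs_def by auto
qed

lemma exists_opp: "v \<in> V \<Longrightarrow> adj E x v \<Longrightarrow> \<exists>z. adj E z v \<and> opp v z x"
  using exists_opp_both by blast

lemma exists_adj: "v \<in> V \<Longrightarrow> \<exists>z. adj E z v"
  using veldkamp_graph unfolding veldkamp_graph_def plump_def nbrs_def by fastforce

lemma straight_path_unique:
  "1 \<le> k \<Longrightarrow> k \<le> 3 \<Longrightarrow> is_path V E k p \<Longrightarrow> straight opp p \<Longrightarrow> j \<le> k \<Longrightarrow> is_path V E j q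
   \<Longrightarrow> straight opp q \<Longrightarrow> hd q = hd p \<Longrightarrow> last q = last p \<Longrightarrow> q = p"
  using veldkamp_4gon unfolding veldkamp_ngon_def by auto

lemma straight_path_closes_to_circuit:
  "is_path V E 5 p \<Longrightarrow> straight opp p \<Longrightarrow> \<exists>c. straight_circuit V E opp 8 c \<and> path_in V E c 5 p"
  using veldkamp_4gon unfolding veldkamp_ngon_def by auto

lemma common_line_unique:
  assumes "p \<in> P" "p \<noteq> q" "adj E p l" "adj E l q" "adj E p m" "adj E m q"
  shows "l = m"
proof -
  have "l \<notin> P" "m \<notin> P" using assms(1) adj_point_iff[OF assms(3)] adj_point_iff[OF assms(5)] by simp_all
  then have "opp l p q" "opp m p q"
    using line_opp assms(2,3,5) adj_sym[OF assms(4)] adj_sym[OF assms(6)] by blast+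
  moreover have "is_path V E 2 [p, l, q]" "is_path V E 2 [p, m, q]"
    using assms adj_in_V by (auto simp: numeral_eq_Suc path_simps)
  ultimately show ?thesis
    using straight_path_unique[of 2 "[p, l, q]" 2 "[p, m, q]"]
    by (simp add: path_simps)
qed

lemma no_4_circuit:
  assumes "adj E u v" "adj E v w" "adj E w z" "adj E z u" "u \<noteq> w" "v \<noteq> z"
  shows False
proof (cases "u \<in> P")
  case True
  then show ?thesis using common_line_unique[of u w v z] assms adj_sym[OF assms(3)] adj_sym[OF assms(4)]
    by blast
next
  case False
  then have "v \<in> P" using assms(1) adj_point_iff by blast
  then show ?thesis using common_line_unique[of v z w u] assms adj_sym[OF assms(1)] adj_sym[OF assms(4)]
    by blast
qed

subsection \<open>Octagon closure\<close>

lemma straight_octagon_distinct: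
  assumes "straight_circuit V E opp 8 c"
  shows "distinct (butlast c)"
proof -
  have path: "is_path V E 8 c" and closed: "hd c = last c"
    and straight: "\<And>t ys. path_in V E c t ys \<Longrightarrow> straight opp ys"
    using assms unfolding straight_circuit_def closed_path_def by auto
  then have "length c = 9" unfolding is_path_def by simp
  then obtain c0 c1 c2 c3 c4 c5 c6 c7 c8 where c: "c = [c0, c1, c2, c3, c4, c5, c6, c7, c8]"
    by (auto simp: numeral_eq_Suc length_Suc_conv)
  have c8: "c8 = c0" using closed c by simp
  have V: "{c0, c1, c2, c3, c4, c5, c6, c7} \<subseteq> V"
    and adj: "adj E c0 c1" "adj E c1 c2" "adj E c2 c3" "adj E c3 c4" "adj E c4 c5" "adj E c5 c6"
      "adj E c6 c7" "adj E c7 c0"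
    and dist2: "c0 \<noteq> c2" "c1 \<noteq> c3" "c2 \<noteq> c4" "c3 \<noteq> c5" "c4 \<noteq> c6" "c5 \<noteq> c7" "c6 \<noteq> c0"
    using path c8 unfolding c by (simp_all add: numeral_eq_Suc path_simps)
  have odd: "c0 \<noteq> c1" "c0 \<noteq> c3" "c0 \<noteq> c5" "c0 \<noteq> c7" "c1 \<noteq> c2" "c1 \<noteq> c4" "c1 \<noteq> c6"
    "c2 \<noteq> c3" "c2 \<noteq> c5" "c2 \<noteq> c7" "c3 \<noteq> c4" "c3 \<noteq> c6" "c4 \<noteq> c5" "c4 \<noteq> c7" "c5 \<noteq> c6" "c6 \<noteq> c7"
    using adj[THEN adj_point_iff] by blast+
  have dist4: "c0 \<noteq> c4" "c1 \<noteq> c5" "c2 \<noteq> c6" "c3 \<noteq> c7"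
    using no_4_circuit[of c0 c1 c2 c3] no_4_circuit[of c1 c2 c3 c4] no_4_circuit[of c2 c3 c4 c5]
      no_4_circuit[of c3 c4 c5 c6] adj dist2 by blast+
  \<comment> \<open>the one pair at distance 2 not separated by the path condition\<close>
  have "c1 \<noteq> c7"
  proof
    assume c17: "c1 = c7"
    have paths: "path_in V E c 3 [c1, c2, c3, c4]" "path_in V E c 3 [c1, c6, c5, c4]"
      using V adj adj_sym[OF adj(5)] adj_sym[OF adj(6)] adj_sym[OF adj(7)] dist2 dist4 c17 c8
      unfolding path_in_iff c
      by (simp_all add: numeral_eq_Suc path_simps insert_commute)
    then have "[c1, c6, c5, c4] = [c1, c2, c3, c4]"
      by (intro straight_path_unique[of 3 _ 3]) (auto simp: path_in_iff intro: straight)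
    then show False using dist4 by simp
  qed
  then show ?thesis using odd dist2 dist4 unfolding c by simp
qed

context
  fixes c assumes octagon: "straight_circuit V E opp 8 c"
begin

lemma octagon_shape: "is_path V E 8 c" "hd c = last c" "2 \<le> length c"
  using octagon unfolding straight_circuit_def closed_path_def is_path_def by auto

lemma octagon_cyc_nth_eq_iff: "cyc_nth c i = cyc_nth c j \<longleftrightarrow> i mod 8 = j mod 8"
proof -
  have "length c = 9" using octagon_shape(1) unfolding is_path_def by simp
  then show ?thesis using cyc_nth_eq_iff[OF octagon_shape(3) straight_octagon_distinct[OF octagon]] by simp
qed

lemma octagon_cyc_nth_adj: "adj E (cyc_nth c i) (cyc_nth c (i + 1))"
proof (rule cyc_nth_consecutive[OF octagon_shape(3,2)])
  show "adj E (c ! r) (c ! Suc r)" if "Suc r < length c" for r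
    using octagon_shape(1) that unfolding is_path_def by simp
qed

lemma octagon_cyc_nth_edge: "{cyc_nth c i, cyc_nth c (i + 1)} \<in> seq_edges c"
  by (rule cyc_nth_consecutive[OF octagon_shape(3,2), where R = "\<lambda>x y. {x, y} \<in> seq_edges c"])
    (auto simp: seq_edges_def)

lemma octagon_cyc_nth_opp: "opp (cyc_nth c i) (cyc_nth c (i - 1)) (cyc_nth c (i + 1))"
proof -
  let ?C = "cyc_nth c"
  have "set c \<subseteq> V" using octagon_shape(1) unfolding is_path_def by simp
  then have "?C j \<in> V \<and> ?C j \<in> set c" for j using cyc_nth_in_set[OF octagon_shape(3)] by blast
  moreover have "?C (i - 1) \<noteq> ?C (i + 1)" unfolding octagon_cyc_nth_eq_iff mod_eq_dvd_iff by simp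
  moreover have "adj E (?C (i - 1)) (?C i)" "{?C (i - 1), ?C i} \<in> seq_edges c"
    using octagon_cyc_nth_adj[of "i - 1"] octagon_cyc_nth_edge[of "i - 1"] by simp_all
  ultimately have "path_in V E c 2 [?C (i - 1), ?C i, ?C (i + 1)]"
    using octagon_cyc_nth_adj[of i] octagon_cyc_nth_edge[of i]
    by (simp add: path_in_iff numeral_eq_Suc path_simps)
  then have "straight opp [?C (i - 1), ?C i, ?C (i + 1)]"
    using octagon unfolding straight_circuit_def by blast
  then show ?thesis by (simp add: path_simps)
qed

lemma octagon_cyc_nth_adj_step:
  assumes "s = 1 \<or> s = -1"
  shows "adj E (cyc_nth c x) (cyc_nth c (x + s))"
  using assms octagon_cyc_nth_adj[of x] adj_sym[OF octagon_cyc_nth_adj[of "x - 1"]] by auto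

lemma octagon_cyc_nth_opp_step:
  assumes "s = 1 \<or> s = -1"
  shows "opp (cyc_nth c x) (cyc_nth c (x - s)) (cyc_nth c (x + s))"
proof -
  have "cyc_nth c x \<in> V" using adj_in_V[OF octagon_cyc_nth_adj[of x]] by blast
  then show ?thesis using assms octagon_cyc_nth_opp[of x] opp_sym by auto
qed

lemma octagon_path_along:
  assumes p: "path_in V E c m p" and m: "1 \<le> m"
  shows "\<exists>k s. (s = 1 \<or> s = -1) \<and> (\<forall>i\<le>m. p ! i = cyc_nth c (k + s * int i))"
proof -
  let ?C = "cyc_nth c"
  have edges: "\<exists>j. {p ! i, p ! Suc i} = {?C j, ?C (j + 1)}" if "i < m" for i
    using p that seq_edges_cyc_nth[OF octagon_shape(3,2)] unfolding path_in_def by blast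
  have nonbacktracking: "\<forall>i. 2 \<le> i \<and> i \<le> m \<longrightarrow> p ! (i - 2) \<noteq> p ! i"
    using p unfolding path_in_def is_path_def by blast
  have nb: "p ! i \<noteq> p ! Suc (Suc i)" if "Suc (Suc i) \<le> m" for i
    using nonbacktracking[rule_format, of "Suc (Suc i)"] that by simp
  have "p ! 0 \<in> set c" using p m unfolding path_in_def is_path_def by auto
  then obtain k where p0: "p ! 0 = ?C k" using in_set_cyc_nth[OF octagon_shape(3,2)] by blast
  obtain j where "{?C k, p ! 1} = {?C j, ?C (j + 1)}" using edges[of 0] m p0 by auto
  then have "p ! 1 = ?C (k + 1) \<or> p ! 1 = ?C (k - 1)"
    by (rule periodic_neighbour[OF octagon_cyc_nth_eq_iff])
  then obtain s where s: "s = 1 \<or> s = -1" and p1: "p ! 1 = ?C (k + s)" by (metis diff_conv_add_uminus)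
  then show ?thesis
    using nonbacktracking_walk_periodic[OF octagon_cyc_nth_eq_iff edges nb p0 p1 s] by blast
qed

end

lemma straight_5path_closes:
  assumes path: "is_path V E 5 [p0, p1, p2, p3, p4, p5]"
    and straight: "straight opp [p0, p1, p2, p3, p4, p5]"
  shows "\<exists>q6 q7. adj E p5 q6 \<and> adj E q6 q7 \<and> adj E q7 p0 \<and> straight opp [p4, p5, q6, q7, p0, p1]"
proof -
  obtain c where octagon: "straight_circuit V E opp 8 c"
    and p_in: "path_in V E c 5 [p0, p1, p2, p3, p4, p5]"
    using straight_path_closes_to_circuit[OF path straight] by blast
  obtain k s where s: "s = 1 \<or> s = -1"
    and along: "\<forall>i\<le>5. [p0, p1, p2, p3, p4, p5] ! i = cyc_nth c (k + s * int i)"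
    using octagon_path_along[OF octagon p_in] by auto
  define C where "C = cyc_nth c"
  have p: "p0 = C k" "p1 = C (k + s)" "p4 = C (k + s * 4)" "p5 = C (k + s * 5)"
    using along[rule_format, of 0] along[rule_format, of 1] along[rule_format, of 4]
      along[rule_format, of 5]
    unfolding C_def by simp_all
  have adj_along: "adj E (C (k + s * j)) (C (k + s * (j + 1)))" for j
    using octagon_cyc_nth_adj_step[OF octagon s, of "k + s * j"] unfolding C_def by (simp add: algebra_simps)
  have opp_along: "opp (C (k + s * j)) (C (k + s * (j - 1))) (C (k + s * (j + 1)))" for j
    using octagon_cyc_nth_opp_step[OF octagon s, of "k + s * j"] unfolding C_def by (simp add: algebra_simps)
  have wrap: "C (k + s * 8) = p0" "C (k + s * 9) = p1"
    unfolding p C_def octagon_cyc_nth_eq_iff[OF octagon] mod_eq_dvd_iff by simp_all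
  show ?thesis
  proof (intro exI conjI)
    show "adj E p5 (C (k + s * 6))" "adj E (C (k + s * 6)) (C (k + s * 7))" "adj E (C (k + s * 7)) p0"
      using adj_along[of 5] adj_along[of 6] adj_along[of 7] p(3,4) wrap by simp_all
    show "straight opp [p4, p5, C (k + s * 6), C (k + s * 7), p0, p1]"
      using opp_along[of 5] opp_along[of 6] opp_along[of 7] opp_along[of 8] p(3,4) wrap
      by (simp add: path_simps)
  qed
qed

subsection \<open>Roots and opposite points\<close>

definition collinear :: "'v \<Rightarrow> 'v \<Rightarrow> bool" where
  "collinear p q \<longleftrightarrow> (\<exists>l. adj E p l \<and> adj E l q)"

(* For a point a, straightness of [a, x, b, y, d] at the lines x and y is automatic by greenness
   (see op_set_eq), so only the condition at b remains. *)
definition root :: "'v \<Rightarrow> 'v \<Rightarrow> 'v \<Rightarrow> 'v \<Rightarrow> 'v \<Rightarrow> bool" where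
  "root a x b y d \<longleftrightarrow> adj E a x \<and> adj E x b \<and> adj E b y \<and> adj E y d \<and> a \<noteq> b \<and> b \<noteq> d \<and> opp b x y"

definition opposite :: "'v \<Rightarrow> 'v \<Rightarrow> bool" where
  "opposite a d \<longleftrightarrow> (\<exists>x b y. root a x b y d)"

lemma collinear_sym: "collinear p q \<Longrightarrow> collinear q p"
  unfolding collinear_def using adj_sym[of E] by blast

lemma root_sym:
  assumes "root a x b y d"
  shows "root d y b x a"
proof -
  have r: "adj E a x" "adj E x b" "adj E b y" "adj E y d" "a \<noteq> b" "b \<noteq> d" "opp b x y"
    using assms unfolding root_def by auto
  then have "opp b y x" using opp_sym adj_in_V by blast
  then show ?thesis using r(1-6) adj_sym[of E] unfolding root_def by blast
qed

lemma opposite_sym: "opposite a d \<Longrightarrow> opposite d a"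
  unfolding opposite_def using root_sym by blast

lemma root_points:
  assumes "a \<in> P" "root a x b y d"
  shows "x \<notin> P \<and> b \<in> P \<and> y \<notin> P \<and> d \<in> P"
proof -
  have "adj E a x" "adj E x b" "adj E b y" "adj E y d" using assms(2) unfolding root_def by auto
  then show ?thesis using assms(1) adj_point_iff by blast
qed

lemma opposite_point: "a \<in> P \<Longrightarrow> opposite a d \<Longrightarrow> d \<in> P"
  unfolding opposite_def using root_points by blast

lemma root_path:
  assumes "a \<in> P" "root a x b y d"
  shows "is_path V E 4 [a, x, b, y, d] \<and> straight opp [a, x, b, y, d]"
proof -
  have r: "adj E a x" "adj E x b" "adj E b y" "adj E y d" "a \<noteq> b" "b \<noteq> d" "opp b x y"
    using assms(2) unfolding root_def by auto
  have "x \<notin> P" "y \<notin> P" using root_points[OF assms] by auto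
  then have "opp x a b" "opp y b d" using line_opp r adj_sym[of E] by blast+
  moreover have "x \<noteq> y" using opp_neq r(7) adj_in_V[OF r(2)] by blast
  ultimately show ?thesis using r adj_in_V
    by (simp add: numeral_eq_Suc path_simps)
qed

lemma op_set_eq:
  assumes "a \<in> P"
  shows "op_set V E opp 4 a = {d. opposite a d}"
proof (intro set_eqI iffI; simp)
  fix d assume "d \<in> op_set V E opp 4 a"
  then obtain p where p: "is_path V E 4 p" "straight opp p" "hd p = a" "last p = d"
    unfolding op_set_def by blast
  then have "length p = 5" unfolding is_path_def by simp
  then obtain x b y where "p = [a, x, b, y, d]" using p(3,4)
    by (auto simp: numeral_eq_Suc length_Suc_conv)
  then have "root a x b y d" using p(1,2) unfolding root_def
    by (simp add: numeral_eq_Suc path_simps)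
  then show "opposite a d" unfolding opposite_def by blast
next
  fix d assume "opposite a d"
  then obtain x b y where "root a x b y d" unfolding opposite_def by blast
  then show "d \<in> op_set V E opp 4 a" using root_path[OF assms] unfolding op_set_def by force
qed

lemma root_closes_octagon:
  assumes "a \<in> P" "root a x b y d" "adj E d z" "opp d y z"
  shows "\<exists>q6 q7. adj E z q6 \<and> adj E q6 q7 \<and> adj E q7 a \<and>
    opp z d q6 \<and> opp q6 z q7 \<and> opp q7 q6 a \<and> opp a q7 x"
proof -
  have r: "is_path V E 4 [a, x, b, y, d]" "straight opp [a, x, b, y, d]" using root_path[OF assms(1,2)] by auto
  have "d \<in> V" using adj_in_V[OF assms(3)] by blast
  then have "y \<noteq> z" using opp_neq assms(4) by blast
  then have "is_path V E 5 [a, x, b, y, d, z]" "straight opp [a, x, b, y, d, z]"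
    using r assms(3,4) adj_in_V[OF assms(3)]
    by (simp_all add: numeral_eq_Suc path_simps)
  then show ?thesis using straight_5path_closes by (simp add: path_simps)
qed

lemma root_ends_not_collinear:
  assumes a: "a \<in> P" and r: "root a x b y d"
  shows "a \<noteq> d \<and> \<not> collinear a d"
proof -
  have ax: "adj E a x" and xb: "adj E x b" and by': "adj E b y" and yd: "adj E y d"
    and ab: "a \<noteq> b" and oxy: "opp b x y" using r unfolding root_def by auto
  have "x \<noteq> y" using opp_neq oxy adj_in_V[OF xb] by blast
  then have ad: "a \<noteq> d"
    using common_line_unique[of a b x y] a ab ax xb adj_sym[OF yd] adj_sym[OF by'] by blast
  moreover have "\<not> collinear a d"
  proof
    assume "collinear a d"
    then obtain z where az: "adj E a z" and zd: "adj E z d" unfolding collinear_def by blast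
    have aV: "a \<in> V" using a points_in_V by blast
    obtain w where wa: "adj E w a" and owx: "opp a w x" and owz: "opp a w z"
      using exists_opp_both[OF aV adj_sym[OF ax] adj_sym[OF az]] by blast
    have d: "d \<in> P" using root_points[OF a r] by blast
    obtain q6 q7 where q: "adj E w q6" "adj E q6 q7" "adj E q7 d" "opp w a q6" "opp q6 w q7" "opp q7 q6 d"
      using root_closes_octagon[OF d root_sym[OF r] adj_sym[OF wa] opp_sym[OF aV owx]] by blast
    have V: "w \<in> V" "q6 \<in> V" "q7 \<in> V" "z \<in> V" "d \<in> V" using q adj_in_V zd by blast+
    have "z \<notin> P" using adj_point_iff[OF az] a by blast
    then have ozad: "opp z a d" using line_opp az adj_sym[OF zd] ad by blast
    have "w \<noteq> z" "w \<noteq> q7" "q6 \<noteq> d" using opp_neq V owz q(5,6) aV by blast+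
    then have "[w, q6, q7, d] = [w, a, z, d]"
      using q V aV wa az zd ad owz ozad
      by (intro straight_path_unique[of 3 _ 3]) (simp_all add: numeral_eq_Suc path_simps)
    then show False using opp_neq[OF V(1) q(4)] by simp
  qed
  ultimately show ?thesis ..
qed

lemma root_rotate:
  assumes a: "a \<in> P" and r: "root a u e v d" and oxu: "opp a x u"
  shows "\<exists>t s. root a x t s d"
proof -
  have aV: "a \<in> V" using a points_in_V by blast
  have d: "d \<in> P" using root_points[OF a r] by blast
  have ax: "adj E a x" using adj_sym[OF conjunct1[OF opp_adj[OF aV oxu]]] .
  obtain q6 q7 where q: "adj E x q6" "adj E q6 q7" "adj E q7 d" "opp x a q6" "opp q6 x q7" "opp q7 q6 d"
    using root_closes_octagon[OF d root_sym[OF r] ax opp_sym[OF aV oxu]] by blast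
  have "x \<in> V" "q7 \<in> V" using adj_in_V q(1,3) by blast+
  then have "a \<noteq> q6" "q6 \<noteq> d" using opp_neq q(4,6) by blast+
  then have "root a x q6 q7 d" using ax q(1-3,5) unfolding root_def by blast
  then show ?thesis by blast
qed

lemma root_through_line:
  assumes a: "a \<in> P" and "opposite a d" and ax: "adj E a x"
  shows "\<exists>t s. root a x t s d"
proof -
  obtain u e v where r: "root a u e v d" using assms(2) unfolding opposite_def by blast
  have aV: "a \<in> V" using a points_in_V by blast
  have "adj E u a" using r adj_sym[of E a u] unfolding root_def by blast
  then obtain x' where "opp a x' u" "opp a x' x"
    using exists_opp_both[OF aV _ adj_sym[OF ax]] by blast
  then obtain t' s' where "root a x' t' s' d" using root_rotate[OF a r] by blast
  then show ?thesis using root_rotate[OF a] opp_sym[OF aV \<open>opp a x' x\<close>] by blast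
qed

lemma opposite_path_is_root:
  assumes a: "a \<in> P" and "opposite a d" and ax: "adj E a x" and xb: "adj E x b"
    and by': "adj E b y" and yd: "adj E y d" and ab: "a \<noteq> b" and bd: "b \<noteq> d"
  shows "root a x b y d"
proof -
  obtain t s where r: "root a x t s d" using root_through_line[OF a assms(2) ax] by blast
  have xt: "adj E x t" and ts: "adj E t s" and sd: "adj E s d" and td: "t \<noteq> d" and o: "opp t x s"
    using r unfolding root_def by auto
  have b: "b \<in> P" using a adj_point_iff[OF ax] adj_point_iff[OF xb] by blast
  have bt: "b = t"
  proof (rule ccontr)
    assume "b \<noteq> t"
    then have "root b x t s d" unfolding root_def using adj_sym[OF xb] xt ts sd td o by blast
    moreover have "collinear b d" unfolding collinear_def using by' yd by blast
    ultimately show False using root_ends_not_collinear b by blast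
  qed
  have "y = s" using common_line_unique[of b d y s] by' yd ts sd bd b bt by blast
  then show ?thesis using r bt ab bd by' yd unfolding root_def by blast
qed

lemma opposite_not_collinear:
  assumes c: "c \<in> P" and "\<not> opposite a c" and "\<not> collinear a c" and "opposite c e"
  shows "\<not> collinear e a"
proof
  assume "collinear e a"
  then obtain s where es: "adj E e s" and sa: "adj E s a" unfolding collinear_def by blast
  have e: "e \<in> P" using opposite_point[OF c assms(4)] .
  obtain t u where r: "root e s t u c"
    using root_through_line[OF e opposite_sym[OF assms(4)] es] by blast
  show False
  proof (cases "t = a")
    case True
    then show False using assms(3) r unfolding root_def collinear_def by blast
  next
    case False
    then have "root a s t u c" using r adj_sym[OF sa] unfolding root_def by blast
    then show False using assms(2) unfolding opposite_def by blast
  qed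
qed

lemma exists_root:
  assumes a: "a \<in> P"
  shows "\<exists>x b y d. root a x b y d"
proof -
  have aV: "a \<in> V" using a points_in_V by blast
  obtain x where xa: "adj E x a" using exists_adj[OF aV] by blast
  have xV: "x \<in> V" using adj_in_V[OF xa] by blast
  obtain b where bx: "adj E b x" and oba: "opp x b a" using exists_opp[OF xV adj_sym[OF xa]] by blast
  have bV: "b \<in> V" using adj_in_V[OF bx] by blast
  obtain y where yb: "adj E y b" and oyx: "opp b y x" using exists_opp[OF bV adj_sym[OF bx]] by blast
  have yV: "y \<in> V" using adj_in_V[OF yb] by blast
  obtain d where dy: "adj E d y" and ody: "opp y d b" using exists_opp[OF yV adj_sym[OF yb]] by blast
  have "root a x b y d" unfolding root_def
    using adj_sym[OF xa] adj_sym[OF bx] adj_sym[OF yb] adj_sym[OF dy] opp_neq[OF xV oba]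
      opp_neq[OF yV ody] opp_sym[OF bV oyx] by blast
  then show ?thesis by blast
qed

subsection \<open>Points at distance four that are not opposite\<close>

(* For points, the path and the non-collinearity say that a and c are at distance 4. *)
definition far_nonopposite :: "'v \<Rightarrow> 'v \<Rightarrow> bool" where
  "far_nonopposite a c \<longleftrightarrow>
    (\<exists>x b y. adj E a x \<and> adj E x b \<and> adj E b y \<and> adj E y c \<and> a \<noteq> b \<and> b \<noteq> c) \<and>
    \<not> collinear a c \<and> \<not> opposite a c"

lemma far_nonopposite_sym: "far_nonopposite a c \<Longrightarrow> far_nonopposite c a"
  unfolding far_nonopposite_def using adj_sym[of E] collinear_sym opposite_sym by metis

lemma far_nonopposite_point: "a \<in> P \<Longrightarrow> far_nonopposite a c \<Longrightarrow> c \<in> P"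
  unfolding far_nonopposite_def using adj_point_iff by blast

lemma collinear_transfer_through_line:
  assumes a: "a \<in> P" and ax: "adj E a x" and xb: "adj E x b" and by': "adj E b y" and yc: "adj E y c"
    and ab: "a \<noteq> b" and bc: "b \<noteq> c" and "\<not> collinear a c" and "\<not> opposite a c"
    and oy: "opp c y' y" and fy: "adj E f y'" and fc: "f \<noteq> c"
  shows "collinear f a \<and> f \<noteq> a"
proof -
  have b: "b \<in> P" and c: "c \<in> P" using a adj_point_iff[OF ax] adj_point_iff[OF xb]
      adj_point_iff[OF by'] adj_point_iff[OF yc] by blast+
  have cV: "c \<in> V" using c points_in_V by blast
  have y'c: "adj E y' c" using opp_adj[OF cV oy] by blast
  have r: "root b y c y' f" unfolding root_def
    using by' yc adj_sym[OF y'c] adj_sym[OF fy] bc fc opp_sym[OF cV oy] by blast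
  obtain g h where "root b x g h f"
    using root_through_line[OF b _ adj_sym[OF xb]] r unfolding opposite_def by blast
  then have xg: "adj E x g" and gh: "adj E g h" and hf: "adj E h f" and gf: "g \<noteq> f" and o: "opp g x h"
    unfolding root_def by auto
  have "g = a"
  proof (rule ccontr)
    assume "g \<noteq> a"
    then have "opposite a f" using ax xg gh hf gf o unfolding root_def opposite_def by blast
    then have "\<not> collinear f c"
      using opposite_not_collinear[OF a] assms(8,9) collinear_sym opposite_sym by blast
    moreover have "collinear f c" unfolding collinear_def using fy y'c by blast
    ultimately show False by blast
  qed
  moreover have "f \<noteq> a"
  proof
    assume "f = a"
    then have "\<not> collinear b a" using root_ends_not_collinear[OF b r] by blast
    moreover have "collinear b a" unfolding collinear_def using adj_sym[OF xb] adj_sym[OF ax] by blast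
    ultimately show False by blast
  qed
  ultimately show ?thesis using gh hf adj_sym[of E] unfolding collinear_def by blast
qed

lemma collinear_transfer:
  assumes a: "a \<in> P" and far: "far_nonopposite a c" and cf: "collinear f c" and fc: "f \<noteq> c"
  shows "collinear f a \<and> f \<noteq> a"
proof -
  obtain x b y where path: "adj E a x" "adj E x b" "adj E b y" "adj E y c" "a \<noteq> b" "b \<noteq> c"
    and ncol: "\<not> collinear a c" and nop: "\<not> opposite a c"
    using far unfolding far_nonopposite_def by blast
  obtain w where fw: "adj E f w" and wc: "adj E w c" using cf unfolding collinear_def by blast
  have cV: "c \<in> V" using far_nonopposite_point[OF a far] points_in_V by blast
  obtain y' where y'c: "adj E y' c" and o1: "opp c y' y" and o2: "opp c y' w"
    using exists_opp_both[OF cV path(4) wc] by blast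
  have y'V: "y' \<in> V" using adj_in_V[OF y'c] by blast
  obtain f0 where f0: "adj E f0 y'" and of0: "opp y' f0 c"
    using exists_opp[OF y'V adj_sym[OF y'c]] by blast
  have f0c: "f0 \<noteq> c" using opp_neq[OF y'V of0] .
  obtain h where f0h: "adj E f0 h" and ha: "adj E h a" and f0a: "f0 \<noteq> a"
    using collinear_transfer_through_line[OF a path ncol nop o1 f0 f0c] unfolding collinear_def by blast
  show ?thesis
    using collinear_transfer_through_line[OF a adj_sym[OF ha] adj_sym[OF f0h] f0 y'c not_sym[OF f0a] f0c
        ncol nop opp_sym[OF cV o2] fw fc] .
qed

lemma opposite_transfer:
  assumes a: "a \<in> P" and far: "far_nonopposite a c" and od: "opposite a d"
  shows "opposite c d"
proof (rule ccontr)
  assume ncd: "\<not> opposite c d"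
  have c: "c \<in> P" using far_nonopposite_point[OF a far] .
  have ncol: "\<not> collinear c a" and nop: "\<not> opposite c a"
    using far collinear_sym opposite_sym unfolding far_nonopposite_def by blast+
  note to_c = collinear_transfer[OF c far_nonopposite_sym[OF far]]
  obtain u e v where r: "root a u e v d" using od unfolding opposite_def by blast
  have au: "adj E a u" and ue: "adj E u e" and ev: "adj E e v" and vd: "adj E v d"
    and ae: "a \<noteq> e" and ed: "e \<noteq> d" using r unfolding root_def by auto
  have d: "d \<in> P" using root_points[OF a r] by blast
  have "collinear e a" unfolding collinear_def using adj_sym[OF ue] adj_sym[OF au] by blast
  then obtain m where em: "adj E e m" and mc: "adj E m c" and ec: "e \<noteq> c"
    using to_c ae unfolding collinear_def by blast
  have "far_nonopposite d c"
    unfolding far_nonopposite_def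
    using adj_sym[OF vd] adj_sym[OF ev] em mc ed ec opposite_not_collinear[OF a nop ncol od]
      ncd opposite_sym by blast
  note to_d = collinear_transfer[OF d this]
  have uV: "u \<in> V" using adj_in_V[OF au] by blast
  obtain o' where ou: "adj E o' u" and o1: "opp u o' a" and o2: "opp u o' e"
    using exists_opp_both[OF uV au adj_sym[OF ue]] by blast
  have "o' \<noteq> a" "o' \<noteq> e" using opp_neq[OF uV o1] opp_neq[OF uV o2] by blast+
  moreover have "o' \<in> P" using a adj_point_iff[OF ou] adj_point_iff[OF au] by blast
  moreover have "collinear o' a" unfolding collinear_def using ou au adj_sym[of E] by blast
  ultimately have "collinear o' d" "root o' u e v d" "o' \<in> P"
    using to_c to_d ou ue ev vd ed r unfolding root_def by blast+
  then show False using root_ends_not_collinear by blast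
qed

lemma same_opposites_not_collinear:
  assumes a: "a \<in> P" and c: "c \<in> P" and ac: "a \<noteq> c"
    and same: "\<And>d. opposite a d \<longleftrightarrow> opposite c d"
  shows "\<not> collinear a c"
proof
  assume "collinear a c"
  then obtain z where az: "adj E a z" and zc: "adj E z c" unfolding collinear_def by blast
  have aV: "a \<in> V" using a points_in_V by blast
  obtain w where wa: "adj E w a" and owz: "opp a w z" using exists_opp[OF aV adj_sym[OF az]] by blast
  have wV: "w \<in> V" using adj_in_V[OF wa] by blast
  obtain e where ew: "adj E e w" and oea: "opp w e a" using exists_opp[OF wV adj_sym[OF wa]] by blast
  have eV: "e \<in> V" using adj_in_V[OF ew] by blast
  obtain v where ve: "adj E v e" and ovw: "opp e v w" using exists_opp[OF eV adj_sym[OF ew]] by blast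
  have "root c z a w e" unfolding root_def
    using adj_sym[OF zc] adj_sym[OF az] adj_sym[OF wa] adj_sym[OF ew] ac opp_neq[OF wV oea]
      opp_sym[OF aV owz] by blast
  then obtain q6 q7 where q: "adj E v q6" "adj E q6 q7" "adj E q7 c" "opp v e q6"
    using root_closes_octagon[OF c _ adj_sym[OF ve] opp_sym[OF eV ovw]] by blast
  have "e \<noteq> q6" using opp_neq q(4) adj_in_V[OF ve] by blast
  then have "root a w e v q6" unfolding root_def
    using adj_sym[OF wa] adj_sym[OF ew] adj_sym[OF ve] q(1) opp_neq[OF wV oea] opp_sym[OF eV ovw] by blast
  then have "opposite c q6" using same unfolding opposite_def by blast
  then obtain x b y where "root c x b y q6" unfolding opposite_def by blast
  moreover have "collinear c q6" unfolding collinear_def using q(2,3) adj_sym[of E] by blast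
  ultimately show False using root_ends_not_collinear[OF c] by blast
qed

lemma same_opposites_nonstraight_path:
  assumes a: "a \<in> P" and c: "c \<in> P" and ac: "a \<noteq> c"
    and same: "\<And>d. opposite a d \<longleftrightarrow> opposite c d"
  shows "\<exists>x b s. adj E a x \<and> adj E x b \<and> adj E b s \<and> adj E s c \<and> a \<noteq> b \<and> b \<noteq> c \<and> x \<noteq> s \<and>
    \<not> opp b x s"
proof -
  obtain x b y d where r: "root a x b y d" using exists_root[OF a] by blast
  then have ax: "adj E a x" and xb: "adj E x b" and yd: "adj E y d" and ab: "a \<noteq> b"
    unfolding root_def by auto
  have "opposite d c" using r same opposite_sym unfolding opposite_def by blast
  then obtain t s where r2: "root d y t s c"
    using root_through_line[OF _ _ adj_sym[OF yd]] root_points[OF a r] by blast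
  have yt: "adj E y t" and ts: "adj E t s" and sc: "adj E s c" and tc: "t \<noteq> c"
    using r2 unfolding root_def by auto
  have tb: "t = b"
  proof (rule ccontr)
    assume "t \<noteq> b"
    then have "opposite c t" using r yt same unfolding root_def opposite_def by blast
    then obtain x' b' y' where "root c x' b' y' t" unfolding opposite_def by blast
    moreover have "collinear c t" unfolding collinear_def using ts sc adj_sym[of E] by blast
    ultimately show False using root_ends_not_collinear[OF c] by blast
  qed
  have "x \<noteq> s"
  proof
    assume "x = s"
    then have "collinear a c" unfolding collinear_def using ax sc adj_sym[of E] by blast
    then show False using same_opposites_not_collinear[OF a c ac same] by blast
  qed
  moreover have "\<not> opp b x s"
  proof
    assume "opp b x s"
    then have "opposite c c" using same ax xb ts sc tb ab tc adj_sym[of E]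
      unfolding root_def opposite_def by blast
    then obtain x' b' y' where "root c x' b' y' c" unfolding opposite_def by blast
    then show False using root_ends_not_collinear[OF c] by blast
  qed
  ultimately show ?thesis using ax xb ts sc tb ab tc adj_sym[of E] by blast
qed

lemma gdist_witness:
  assumes "u \<in> V" "v \<in> V"
  shows "\<exists>xs. walk E xs \<and> length xs = Suc (gdist E u v) \<and> hd xs = u \<and> last xs = v"
proof -
  obtain xs where xs: "walk E xs" "hd xs = u" "last xs = v"
    using veldkamp_4gon assms unfolding veldkamp_ngon_def connected_graph_def by blast
  then have "length xs = Suc (length xs - 1)" unfolding walk_def by simp
  then have "\<exists>k xs. walk E xs \<and> length xs = Suc k \<and> hd xs = u \<and> last xs = v" using xs by blast
  then show ?thesis unfolding gdist_def by (rule LeastI_ex)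
qed

lemma gdist_small_cases:
  assumes "u \<in> V" "v \<in> V"
  shows "(gdist E u v = 0 \<longrightarrow> u = v) \<and> (gdist E u v = 1 \<longrightarrow> adj E u v) \<and>
    (gdist E u v = 2 \<longrightarrow> collinear u v) \<and> (gdist E u v = 3 \<longrightarrow> (\<exists>z w. adj E u z \<and> adj E z w \<and> adj E w v))"
proof -
  obtain xs where xs: "walk E xs" "length xs = Suc (gdist E u v)" "hd xs = u" "last xs = v"
    using gdist_witness[OF assms] by blast
  show ?thesis
  proof (intro conjI impI)
    assume "gdist E u v = 0"
    then show "u = v" using xs by (auto simp: length_Suc_conv)
  next
    assume "gdist E u v = 1"
    then show "adj E u v" using xs by (auto simp: length_Suc_conv path_simps)
  next
    assume "gdist E u v = 2"
    then show "collinear u v" using xs unfolding collinear_def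
      by (auto simp: length_Suc_conv numeral_eq_Suc path_simps)
  next
    assume "gdist E u v = 3"
    then show "\<exists>z w. adj E u z \<and> adj E z w \<and> adj E w v" using xs
      by (force simp: length_Suc_conv numeral_eq_Suc path_simps)
  qed
qed

lemma gdist_4_far:
  assumes "gdist E a c = 4"
  shows "a \<noteq> c \<and> \<not> collinear a c"
proof (intro conjI notI)
  assume "a = c"
  then show False using assms by simp
next
  assume "collinear a c"
  then obtain z where "adj E a z" "adj E z c" unfolding collinear_def by blast
  then have "gdist E a c \<le> 2" using gdist_le[of E "[a, z, c]"] by (simp add: path_simps)
  then show False using assms by simp
qed

lemma far_points_gdist_4:
  assumes a: "a \<in> P" and c: "c \<in> P" and "a \<noteq> c" "\<not> collinear a c"
    and path: "adj E a x" "adj E x b" "adj E b y" "adj E y c"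
  shows "gdist E a c = 4"
proof -
  have "gdist E a c \<le> 4"
    using gdist_le[of E "[a, x, b, y, c]"] path by (simp add: path_simps)
  moreover have "\<not> (\<exists>z w. adj E a z \<and> adj E z w \<and> adj E w c)" "\<not> adj E a c"
    using a c adj_point_iff by blast+
  moreover have "a \<in> V" "c \<in> V" using a c points_in_V by blast+
  ultimately show ?thesis using gdist_small_cases[of a c] assms(3,4) by fastforce
qed

lemma Gamma_2_point_iff:
  assumes a: "a \<in> P"
  shows "u \<in> Gamma_m V E 2 a \<longleftrightarrow> u \<in> V \<and> u \<noteq> a \<and> collinear u a"
proof
  assume "u \<in> Gamma_m V E 2 a"
  then have u: "u \<in> V" and g: "gdist E u a = 2" unfolding Gamma_m_def by auto
  have "collinear u a" using gdist_small_cases[of u a] u a points_in_V g by auto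
  moreover have "u \<noteq> a" using g by auto
  ultimately show "u \<in> V \<and> u \<noteq> a \<and> collinear u a" using u by blast
next
  assume h: "u \<in> V \<and> u \<noteq> a \<and> collinear u a"
  then obtain z where uz: "adj E u z" and za: "adj E z a" unfolding collinear_def by blast
  have "gdist E u a \<le> 2"
    using gdist_le[of E "[u, z, a]"] uz za by (simp add: path_simps)
  moreover have "\<not> adj E u a" using a adj_point_iff uz za by blast
  moreover have "a \<in> V" using a points_in_V by blast
  ultimately have "gdist E u a = 2" using gdist_small_cases[of u a] h by fastforce
  then show "u \<in> Gamma_m V E 2 a" unfolding Gamma_m_def using h by blast
qed

lemma weed_far_nonopposite:
  assumes "weed V E opp P w"
  shows "hd w \<in> P \<and> far_nonopposite (hd w) (last w)"
proof -
  have w: "is_path V E 4 w" "\<not> straight opp w" "w ! 0 \<in> P" "w ! 2 \<in> P" "gdist E (w ! 0) (w ! 4) = 4"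
    using assms unfolding weed_def by auto
  then have "length w = 5" unfolding is_path_def by simp
  then obtain a x b y c where wl: "w = [a, x, b, y, c]" by (auto simp: numeral_eq_Suc length_Suc_conv)
  have path: "adj E a x" "adj E x b" "adj E b y" "adj E y c" "a \<noteq> b" "b \<noteq> c"
    and ns: "\<not> (opp x a b \<and> opp b x y \<and> opp y b c)" and a: "a \<in> P" and b: "b \<in> P"
    and far: "a \<noteq> c \<and> \<not> collinear a c"
    using w gdist_4_far unfolding wl
    by (simp_all add: numeral_eq_Suc path_simps)
  have "x \<notin> P" "y \<notin> P" using a b adj_point_iff[OF path(1)] adj_point_iff[OF path(3)] by blast+
  then have "opp x a b" "opp y b c"
    using line_opp[OF path(1) adj_sym[OF path(2)]] line_opp[OF path(3) adj_sym[OF path(4)]] path(5,6)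
    by blast+
  then have "\<not> opp b x y" using ns by blast
  then have "\<not> opposite a c" using opposite_path_is_root[OF a _ path] unfolding root_def by blast
  then show ?thesis using a path far unfolding far_nonopposite_def wl by auto
qed

lemma same_opposites_weed:
  assumes a: "a \<in> P" and c: "c \<in> P" and ac: "a \<noteq> c"
    and same: "\<And>d. opposite a d \<longleftrightarrow> opposite c d"
  shows "\<exists>w. weed V E opp P w \<and> hd w = a \<and> last w = c"
proof -
  obtain x b s where path: "adj E a x" "adj E x b" "adj E b s" "adj E s c" "a \<noteq> b" "b \<noteq> c" "x \<noteq> s"
    and ns: "\<not> opp b x s"
    using same_opposites_nonstraight_path[OF a c ac same] by blast
  have b: "b \<in> P" using a adj_point_iff[OF path(1)] adj_point_iff[OF path(2)] by blast
  have "gdist E a c = 4"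
    using far_points_gdist_4[OF a c ac same_opposites_not_collinear[OF a c ac same] path(1-4)] .
  then have "weed V E opp P [a, x, b, s, c]"
    unfolding weed_def using path ns a b c adj_in_V
    by (simp add: numeral_eq_Suc path_simps)
  then show ?thesis by force
qed

lemma simeq_iff_same_opposites:
  assumes a: "a \<in> P" and c: "c \<in> P"
  shows "simeq V E opp P a c \<longleftrightarrow> (\<forall>d. opposite a d \<longleftrightarrow> opposite c d)"
proof
  assume "simeq V E opp P a c"
  then consider "a = c" | "far_nonopposite a c"
    unfolding simeq_def using weed_far_nonopposite by blast
  then show "\<forall>d. opposite a d \<longleftrightarrow> opposite c d"
  proof cases
    case 2
    then show ?thesis using opposite_transfer[OF a] opposite_transfer[OF c] far_nonopposite_sym by blast
  qed simp
next
  assume "\<forall>d. opposite a d \<longleftrightarrow> opposite c d"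
  then show "simeq V E opp P a c" unfolding simeq_def using same_opposites_weed[OF a c] by blast
qed

lemma simeq_Gamma_2:
  assumes a: "a \<in> P" and c: "c \<in> P" and "simeq V E opp P a c"
  shows "Gamma_m V E 2 a = Gamma_m V E 2 c"
proof (cases "a = c")
  case False
  then have "far_nonopposite a c" using assms(3) weed_far_nonopposite unfolding simeq_def by blast
  then show ?thesis
    using collinear_transfer[OF a] collinear_transfer[OF c] far_nonopposite_sym
      Gamma_2_point_iff[OF a] Gamma_2_point_iff[OF c] by blast
qed simp

end

theorem proposition4p6:
  fixes V :: "'v set" and E :: "'v set set" and opp :: "'v \<Rightarrow> 'v \<Rightarrow> 'v \<Rightarrow> bool"
    and P :: "'v set" and a b :: 'v
  assumes "green_quadrangle V E opp P"
    and "a \<in> P" and "b \<in> P"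
  shows "(simeq V E opp P a b \<longleftrightarrow> op_set V E opp 4 a = op_set V E opp 4 b)
    \<and> (simeq V E opp P a b \<longrightarrow> Gamma_m V E 2 a = Gamma_m V E 2 b)
    \<and> equiv P {(x, y). x \<in> P \<and> y \<in> P \<and> simeq V E opp P x y}"
proof -
  interpret green_veldkamp_quadrangle V E opp P by unfold_locales (rule assms(1))
  have simeq_iff: "simeq V E opp P x y \<longleftrightarrow> op_set V E opp 4 x = op_set V E opp 4 y"
    if "x \<in> P" "y \<in> P" for x y
    using simeq_iff_same_opposites[OF that] op_set_eq[OF that(1)] op_set_eq[OF that(2)] by auto
  have "equiv P {(x, y). x \<in> P \<and> y \<in> P \<and> simeq V E opp P x y}"
    unfolding equiv_def refl_on_def sym_def trans_def using simeq_iff by auto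
  then show ?thesis using simeq_iff simeq_Gamma_2 assms(2,3) by blast
qed

end
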